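(* In the setting below, let $x\in\{0,1\}^n$ satisfy $w_{\mathcal{I}}(x)\in[W-w_{\max},W]$. With probability at least $1-1/n^2$ (over the random partition), for all $\ell\in\{0,\dots,\log_2 q\}$ and all $j\in\{1,\dots,q/2^\ell\}$: (i) $w_{\mathcal{I}^\ell_j}(x)\in J^\ell$, and (ii) $C^\ell_j[w_{\mathcal{I}^\ell_j}(x)]\ge p_{\mathcal{I}^\ell_j}(x)$.
   Context: Setting: a 0-1 Knapsack instance with items $\mathcal{I}=\{1,\dots,n\}$, $n\ge 3$, profits $p_i\in\mathbb{N}$, weights $w_i\in\mathbb{N}$, $w_{\max}=\max_i w_i$, budget $W$ with $w_{\max}\le W\le n\,w_{\max}$. For $\mathcal{J}\subseteq\mathcal{I}$ and $x\in\{0,1\}^n$, $w_{\mathcal{J}}(x)=\sum_{i\in\mathcal{J}}w_ix_i$, $p_{\mathcal{J}}(x)=\sum_{i\in\mathcal{J}}p_ix_i$, and the profit sequence is $\mathcal{P}_{\mathcal{J}}[t]=\max\{p_{\mathcal{J}}(x): x\in\{0,1\}^n,\ w_{\mathcal{J}}(x)\le t\}$ for $t\in\mathbb{N}$ (only items of $\mathcal{J}$ count). For reals $a\le b$, $[a..b]:=\{\max(0,\lfloor a\rfloor),\dots,\lceil b\rceil\}$. Let $q$ be a power of $2$ with $1\le q\le W/w_{\max}$, $\Delta:=w_{\max}W/q$, $\eta:=11\ln n$, and for $\ell\in\{0,\dots,\log_2q\}$ let $J^\ell:=[\tfrac{W}{q}2^\ell-\sqrt{\Delta2^\ell}\eta\,..\,\tfrac{W}{q}2^\ell+\sqrt{\Delta2^\ell}\eta]$.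 Assign each item independently uniformly at random to one of groups $\mathcal{I}^0_1,\dots,\mathcal{I}^0_q$, and set $\mathcal{I}^\ell_j=\mathcal{I}^{\ell-1}_{2j-1}\cup\mathcal{I}^{\ell-1}_{2j}$ for $\ell\ge1$, $1\le j\le q/2^\ell$. Define arrays $C^\ell_j$ indexed by $J^\ell$: $C^0_j[t]=\mathcal{P}_{\mathcal{I}^0_j}[t]$ for $t\in J^0$, and for $\ell\ge1$, $k\in J^\ell$: $C^\ell_j[k]=\max\{C^{\ell-1}_{2j-1}[i]+C^{\ell-1}_{2j}[i'] : i,i'\in J^{\ell-1},\ i+i'=k\}$ (maximum of the empty set is $-\infty$). *)

theory Defs
  imports "HOL-Probability.Probability"
begin

definition binvecs :: "nat \<Rightarrow> (nat \<Rightarrow> nat) set" where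
  "binvecs n = ({1..n} \<rightarrow>\<^sub>E {0::nat, 1})"

definition wsum :: "(nat \<Rightarrow> nat) \<Rightarrow> nat set \<Rightarrow> (nat \<Rightarrow> nat) \<Rightarrow> nat" where
  "wsum w J x = (\<Sum>i\<in>J. w i * x i)"

definition profit_seq :: "nat \<Rightarrow> (nat \<Rightarrow> nat) \<Rightarrow> (nat \<Rightarrow> nat) \<Rightarrow> nat set \<Rightarrow> nat \<Rightarrow> nat" where
  "profit_seq n p w J t = Max {wsum p J x | x. x \<in> binvecs n \<and> wsum w J x \<le> t}"

definition wmax :: "nat \<Rightarrow> (nat \<Rightarrow> nat) \<Rightarrow> nat" where
  "wmax n w = Max (w ` {1..n})"

definition nat_interval :: "real \<Rightarrow> real \<Rightarrow> nat set" where
  "nat_interval a b = {t. max 0 \<lfloor>a\<rfloor> \<le> int t \<and> int t \<le> \<lceil>b\<rceil>}"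

definition Jset :: "nat \<Rightarrow> (nat \<Rightarrow> nat) \<Rightarrow> nat \<Rightarrow> nat \<Rightarrow> nat \<Rightarrow> nat set" where
  "Jset n w W q l =
     (let \<Delta> = real (wmax n w) * real W / real q;
          \<eta> = 11 * ln (real n);
          c = real W / real q * 2 ^ l;
          r = sqrt (\<Delta> * 2 ^ l) * \<eta>
      in nat_interval (c - r) (c + r))"

fun grp :: "(nat \<Rightarrow> nat) \<Rightarrow> nat \<Rightarrow> nat \<Rightarrow> nat \<Rightarrow> nat set" where
  "grp \<sigma> n 0 j = {i \<in> {1..n}. \<sigma> i = j}"
| "grp \<sigma> n (Suc l) j = grp \<sigma> n l (2 * j - 1) \<union> grp \<sigma> n l (2 * j)"

text \<open>Arrays C^l_j (values in ereal; maximum of the empty set is -infinity).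
  Only the entries indexed by J^l are meaningful.\<close>
fun Carr :: "nat \<Rightarrow> (nat \<Rightarrow> nat) \<Rightarrow> (nat \<Rightarrow> nat) \<Rightarrow> nat \<Rightarrow> nat \<Rightarrow> (nat \<Rightarrow> nat)
              \<Rightarrow> nat \<Rightarrow> nat \<Rightarrow> nat \<Rightarrow> ereal" where
  "Carr n p w W q \<sigma> 0 j t = ereal (real (profit_seq n p w (grp \<sigma> n 0 j) t))"
| "Carr n p w W q \<sigma> (Suc l) j k =
     Sup {Carr n p w W q \<sigma> l (2 * j - 1) i + Carr n p w W q \<sigma> l (2 * j) i' | i i'.
            i \<in> Jset n w W q l \<and> i' \<in> Jset n w W q l \<and> i + i' = k}"

end

theory Submission
  imports Defs
begin

(* Fix a level l and a block j, i.e. the 2^l consecutive groups L that form I^l_j. The weight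
   w_{I^l_j}(x) is the sum over the items of the independent terms w_i x_i [sigma i \<in> L], each at
   most w_max, and its mean 2^l/q * w(x) lies between c - w_max and c, where c = 2^l W/q is the
   centre of the window J^l and w_max \<le> c. A Chernoff bound with parameter +-1/sqrt(w_max c)
   shows that the weight leaves J^l for at most 2 e^2 n^-11 of the q^n assignments; there are at
   most q^2 \<le> n^2 blocks, so a union bound gives (i) with probability 1 - 1/n^2.
   Part (ii) is deterministic once (i) holds at all lower levels: by induction on the level, the
   split of x between the two children is a feasible index pair in the max-plus convolution
   defining C^l_j, and at level 0 the restriction of x is feasible for the profit sequence. *)

lemma exp_le_one_plus_plus_square:
  fixes v :: real
  assumes "\<bar>v\<bar> \<le> 1"
  shows "exp v \<le> 1 + v + v\<^sup>2"
proof (cases "v \<ge> 0")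
  case True
  with exp_bound[of v] assms show ?thesis by auto
next
  case False
  define y where "y = - v"
  have y: "0 \<le> y" "y \<le> 1" using False assms by (auto simp: y_def)
  have "1 \<le> 1 + y\<^sup>2 / 2 + y ^ 3 / 2 + y ^ 4 / 2"
    using y by simp
  also have "\<dots> = (1 - y + y\<^sup>2) * (1 + y + y\<^sup>2 / 2)"
    by (simp add: field_simps power2_eq_square power3_eq_cube power4_eq_xxxx)
  also have "\<dots> \<le> (1 - y + y\<^sup>2) * exp y"
  proof (rule mult_left_mono[OF exp_lower_Taylor_quadratic[OF y(1)]])
    show "0 \<le> 1 - y + y\<^sup>2" using y zero_le_power2[of y] by linarith
  qed
  finally have "exp (- y) \<le> 1 - y + y\<^sup>2"
    by (simp add: exp_minus field_simps)
  then show ?thesis by (simp add: y_def)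
qed

lemma bernoulli_mgf_le_exp:
  fixes a \<theta> M p :: real
  assumes "0 \<le> a" "a \<le> M" "\<bar>\<theta>\<bar> * M \<le> 1" "0 \<le> p" "p \<le> 1"
  shows "1 + p * (exp (\<theta> * a) - 1) \<le> exp (p * (\<theta> * a + \<theta>\<^sup>2 * M * a))"
proof -
  have "\<bar>\<theta> * a\<bar> \<le> \<bar>\<theta>\<bar> * M"
    using assms by (simp add: abs_mult mult_left_mono)
  then have "exp (\<theta> * a) - 1 \<le> \<theta> * a + \<theta>\<^sup>2 * a * a"
    using exp_le_one_plus_plus_square[of "\<theta> * a"] assms
    by (simp add: power2_eq_square algebra_simps)
  also have "\<theta>\<^sup>2 * a * a \<le> \<theta>\<^sup>2 * M * a"
    using assms by (intro mult_right_mono mult_left_mono) auto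
  finally have "1 + p * (exp (\<theta> * a) - 1) \<le> 1 + p * (\<theta> * a + \<theta>\<^sup>2 * M * a)"
    using assms by (simp add: mult_left_mono)
  also have "\<dots> \<le> exp (p * (\<theta> * a + \<theta>\<^sup>2 * M * a))"
    by (rule exp_ge_add_one_self)
  finally show ?thesis .
qed

definition assigned_sum :: "'a set \<Rightarrow> ('a \<Rightarrow> 'b) \<Rightarrow> 'b set \<Rightarrow> ('a \<Rightarrow> real) \<Rightarrow> real" where
  "assigned_sum I \<sigma> L a = (\<Sum>i\<in>I. if \<sigma> i \<in> L then a i else 0)"

lemma sum_PiE_exp_assigned_sum_le:
  fixes a :: "'a \<Rightarrow> real" and \<theta> M :: real
  assumes I: "finite I" and Q: "finite Q" "Q \<noteq> {}" and L: "L \<subseteq> Q"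
    and a: "\<And>i. i \<in> I \<Longrightarrow> 0 \<le> a i \<and> a i \<le> M" and \<theta>: "\<bar>\<theta>\<bar> * M \<le> 1"
  defines "\<mu> \<equiv> real (card L) / real (card Q) * sum a I"
  shows "(\<Sum>\<sigma>\<in>I \<rightarrow>\<^sub>E Q. exp (\<theta> * assigned_sum I \<sigma> L a))
     \<le> real (card Q) ^ card I * exp (\<theta> * \<mu> + \<theta>\<^sup>2 * M * \<mu>)"
proof -
  define p where "p = real (card L) / real (card Q)"
  have finL: "finite L" using L Q finite_subset by blast
  have cardQ: "0 < card Q" using Q by (simp add: card_gt_0_iff)
  have cardL: "card L \<le> card Q" by (rule card_mono[OF Q(1) L])
  have p: "0 \<le> p" "p \<le> 1" using cardL cardQ by (auto simp: p_def)
  define f where "f i b = exp (\<theta> * (if b \<in> L then a i else 0))" for i b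
  have factor: "(\<Sum>b\<in>Q. f i b) = real (card Q) * (1 + p * (exp (\<theta> * a i) - 1))" for i
  proof -
    have "(\<Sum>b\<in>Q. f i b) = (\<Sum>b\<in>L. f i b) + (\<Sum>b\<in>Q - L. f i b)"
      using sum.subset_diff[OF L Q(1)] by (simp add: add.commute)
    also have "\<dots> = real (card L) * exp (\<theta> * a i) + (real (card Q) - real (card L))"
      using card_Diff_subset[OF finL L] cardL by (simp add: f_def of_nat_diff)
    also have "\<dots> = real (card Q) * (1 + p * (exp (\<theta> * a i) - 1))"
      using cardQ by (simp add: p_def field_simps)
    finally show ?thesis .
  qed
  have "(\<Sum>\<sigma>\<in>I \<rightarrow>\<^sub>E Q. exp (\<theta> * assigned_sum I \<sigma> L a)) = (\<Sum>\<sigma>\<in>I \<rightarrow>\<^sub>E Q. \<Prod>i\<in>I. f i (\<sigma> i))"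
    using I by (simp add: assigned_sum_def f_def sum_distrib_left exp_sum)
  also have "\<dots> = (\<Prod>i\<in>I. \<Sum>b\<in>Q. f i b)"
    using I Q by (simp add: prod_sum_PiE)
  also have "\<dots> \<le> (\<Prod>i\<in>I. real (card Q) * exp (p * (\<theta> * a i + \<theta>\<^sup>2 * M * a i)))"
  proof (rule prod_mono)
    fix i assume "i \<in> I"
    have "0 \<le> (\<Sum>b\<in>Q. f i b)" by (simp add: f_def sum_nonneg)
    moreover have "(\<Sum>b\<in>Q. f i b) \<le> real (card Q) * exp (p * (\<theta> * a i + \<theta>\<^sup>2 * M * a i))"
      unfolding factor using bernoulli_mgf_le_exp[of "a i" M \<theta> p] a[OF \<open>i \<in> I\<close>] \<theta> p
      by (intro mult_left_mono) auto
    ultimately show "0 \<le> (\<Sum>b\<in>Q. f i b) \<and> (\<Sum>b\<in>Q. f i b) \<le> real (card Q) * exp (p * (\<theta> * a i + \<theta>\<^sup>2 * M * a i))"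
      by blast
  qed
  also have "\<dots> = real (card Q) ^ card I * exp (\<Sum>i\<in>I. p * (\<theta> * a i + \<theta>\<^sup>2 * M * a i))"
    using I by (simp add: prod.distrib exp_sum)
  also have "(\<Sum>i\<in>I. p * (\<theta> * a i + \<theta>\<^sup>2 * M * a i)) = \<theta> * \<mu> + \<theta>\<^sup>2 * M * \<mu>"
    unfolding \<mu>_def p_def[symmetric] by (simp add: sum.distrib sum_distrib_left sum_distrib_right algebra_simps)
  finally show ?thesis .
qed

lemma card_le_exp_Markov:
  fixes Y :: "'a \<Rightarrow> real"
  assumes "finite S"
  shows "real (card {\<sigma>\<in>S. t \<le> Y \<sigma>}) \<le> exp (- t) * (\<Sum>\<sigma>\<in>S. exp (Y \<sigma>))"
proof -
  have "real (card {\<sigma>\<in>S. t \<le> Y \<sigma>}) \<le> (\<Sum>\<sigma>\<in>{\<sigma>\<in>S. t \<le> Y \<sigma>}. exp (Y \<sigma> - t))"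
    using sum_mono[of "{\<sigma>\<in>S. t \<le> Y \<sigma>}" "\<lambda>_. 1::real" "\<lambda>\<sigma>. exp (Y \<sigma> - t)"] by auto
  also have "\<dots> \<le> (\<Sum>\<sigma>\<in>S. exp (Y \<sigma> - t))"
    using assms by (intro sum_mono2) auto
  also have "\<dots> = exp (- t) * (\<Sum>\<sigma>\<in>S. exp (Y \<sigma>))"
    by (simp add: sum_distrib_left exp_diff exp_minus divide_inverse mult.commute)
  finally show ?thesis .
qed

lemma assigned_sum_Chernoff:
  fixes a :: "'a \<Rightarrow> real" and \<theta> M t :: real
  assumes I: "finite I" and Q: "finite Q" "Q \<noteq> {}" and L: "L \<subseteq> Q"
    and a: "\<And>i. i \<in> I \<Longrightarrow> 0 \<le> a i \<and> a i \<le> M" and \<theta>: "\<bar>\<theta>\<bar> * M \<le> 1"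
  defines "\<mu> \<equiv> real (card L) / real (card Q) * sum a I"
  shows "real (card {\<sigma>\<in>I \<rightarrow>\<^sub>E Q. t \<le> \<theta> * assigned_sum I \<sigma> L a})
     \<le> real (card Q) ^ card I * exp (\<theta> * \<mu> + \<theta>\<^sup>2 * M * \<mu> - t)"
proof -
  have "real (card {\<sigma>\<in>I \<rightarrow>\<^sub>E Q. t \<le> \<theta> * assigned_sum I \<sigma> L a})
      \<le> exp (- t) * (\<Sum>\<sigma>\<in>I \<rightarrow>\<^sub>E Q. exp (\<theta> * assigned_sum I \<sigma> L a))"
    using I Q by (intro card_le_exp_Markov finite_PiE) auto
  also have "\<dots> \<le> exp (- t) * (real (card Q) ^ card I * exp (\<theta> * \<mu> + \<theta>\<^sup>2 * M * \<mu>))"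
    using sum_PiE_exp_assigned_sum_le[OF I Q L a \<theta>] by (simp add: \<mu>_def)
  also have "\<dots> = real (card Q) ^ card I * exp (\<theta> * \<mu> + \<theta>\<^sup>2 * M * \<mu> - t)"
    by (simp add: exp_diff exp_minus field_simps)
  finally show ?thesis .
qed

(* With s = sqrt (M c), the parameters +-1/s satisfy |theta| M \<le> 1 and make the variance term
   theta^2 M mu of the Chernoff exponent at most 1. *)
lemma Chernoff_scale_bounds:
  fixes M c \<mu> :: real
  assumes "0 < M" "M \<le> c" "\<mu> \<le> c"
  shows "M \<le> sqrt (M * c)" and "(1 / sqrt (M * c))\<^sup>2 * M * \<mu> \<le> 1"
proof -
  show "M \<le> sqrt (M * c)"
    using assms by (simp add: real_le_rsqrt mult_left_mono power2_eq_square)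
  have "(1 / sqrt (M * c))\<^sup>2 * M * \<mu> \<le> (1 / sqrt (M * c))\<^sup>2 * M * c"
    using assms by (intro mult_left_mono) auto
  also have "\<dots> = 1"
    using assms by (simp add: power_divide)
  finally show "(1 / sqrt (M * c))\<^sup>2 * M * \<mu> \<le> 1" .
qed

lemma assigned_sum_upper_tail:
  fixes a :: "'a \<Rightarrow> real" and M c \<eta> :: real
  assumes I: "finite I" and Q: "finite Q" "Q \<noteq> {}" and L: "L \<subseteq> Q"
    and a: "\<And>i. i \<in> I \<Longrightarrow> 0 \<le> a i \<and> a i \<le> M" and M: "0 < M" "M \<le> c"
  defines "\<mu> \<equiv> real (card L) / real (card Q) * sum a I"
  assumes \<mu>: "\<mu> \<le> c"
  shows "real (card {\<sigma>\<in>I \<rightarrow>\<^sub>E Q. c + sqrt (M * c) * \<eta> \<le> assigned_sum I \<sigma> L a})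
     \<le> exp (1 - \<eta>) * real (card Q) ^ card I"
proof -
  define s where "s = sqrt (M * c)"
  have s: "0 < s" "M \<le> s" and var: "(1 / s)\<^sup>2 * M * \<mu> \<le> 1"
    using Chernoff_scale_bounds[OF M \<mu>] M by (simp_all add: s_def)
  have "{\<sigma>\<in>I \<rightarrow>\<^sub>E Q. c + s * \<eta> \<le> assigned_sum I \<sigma> L a}
      = {\<sigma>\<in>I \<rightarrow>\<^sub>E Q. (c + s * \<eta>) / s \<le> 1 / s * assigned_sum I \<sigma> L a}"
    using s by (auto simp: divide_le_cancel)
  also have "real (card \<dots>)
      \<le> real (card Q) ^ card I * exp (1 / s * \<mu> + (1 / s)\<^sup>2 * M * \<mu> - (c + s * \<eta>) / s)"
    unfolding \<mu>_def using s by (intro assigned_sum_Chernoff[OF I Q L a]) auto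
  also have "\<dots> \<le> real (card Q) ^ card I * exp (1 - \<eta>)"
  proof -
    have "(c + s * \<eta>) / s = c / s + \<eta>" and "1 / s * \<mu> \<le> c / s"
      using s \<mu> by (simp_all add: field_simps divide_right_mono)
    then show ?thesis using var by (intro mult_left_mono) auto
  qed
  finally show ?thesis by (simp add: s_def mult.commute)
qed

lemma assigned_sum_lower_tail:
  fixes a :: "'a \<Rightarrow> real" and M c \<eta> :: real
  assumes I: "finite I" and Q: "finite Q" "Q \<noteq> {}" and L: "L \<subseteq> Q"
    and a: "\<And>i. i \<in> I \<Longrightarrow> 0 \<le> a i \<and> a i \<le> M" and M: "0 < M" "M \<le> c"
  defines "\<mu> \<equiv> real (card L) / real (card Q) * sum a I"
  assumes \<mu>: "\<mu> \<le> c" "c - \<mu> \<le> M"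
  shows "real (card {\<sigma>\<in>I \<rightarrow>\<^sub>E Q. assigned_sum I \<sigma> L a \<le> c - sqrt (M * c) * \<eta>})
     \<le> exp (2 - \<eta>) * real (card Q) ^ card I"
proof -
  define s where "s = sqrt (M * c)"
  have s: "0 < s" "M \<le> s" and var: "(- 1 / s)\<^sup>2 * M * \<mu> \<le> 1"
    using Chernoff_scale_bounds[OF M \<mu>(1)] M by (simp_all add: s_def power2_eq_square)
  have "(s * \<eta> - c) / s \<le> - 1 / s * y" if "y \<le> c - s * \<eta>" for y
    using divide_right_mono[of "s * \<eta> - c" "- y" s] that s by simp
  then have "real (card {\<sigma>\<in>I \<rightarrow>\<^sub>E Q. assigned_sum I \<sigma> L a \<le> c - s * \<eta>})
      \<le> real (card {\<sigma>\<in>I \<rightarrow>\<^sub>E Q. (s * \<eta> - c) / s \<le> - 1 / s * assigned_sum I \<sigma> L a})"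
    using finite_PiE[OF I, of "\<lambda>_. Q"] Q(1) by (intro of_nat_mono card_mono) auto
  also have "\<dots> \<le> real (card Q) ^ card I * exp (- 1 / s * \<mu> + (- 1 / s)\<^sup>2 * M * \<mu> - (s * \<eta> - c) / s)"
    unfolding \<mu>_def using s by (intro assigned_sum_Chernoff[OF I Q L a]) auto
  also have "\<dots> \<le> real (card Q) ^ card I * exp (2 - \<eta>)"
  proof -
    have "- 1 / s * \<mu> - (s * \<eta> - c) / s = (c - \<mu>) / s - \<eta>" and "(c - \<mu>) / s \<le> 1"
      using s \<mu> by (simp_all add: field_simps)
    then show ?thesis using var by (intro mult_left_mono) auto
  qed
  finally show ?thesis by (simp add: s_def mult.commute)
qed

lemma card_assigned_sum_far_from_center_le:
  fixes a :: "'a \<Rightarrow> real" and M c \<eta> :: real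
  assumes I: "finite I" and Q: "finite Q" "Q \<noteq> {}" and L: "L \<subseteq> Q"
    and a: "\<And>i. i \<in> I \<Longrightarrow> 0 \<le> a i \<and> a i \<le> M" and M: "0 < M" "M \<le> c"
  defines "\<mu> \<equiv> real (card L) / real (card Q) * sum a I"
    and "r \<equiv> sqrt (M * c) * \<eta>"
  assumes \<mu>: "\<mu> \<le> c" "c - \<mu> \<le> M"
  shows "real (card {\<sigma>\<in>I \<rightarrow>\<^sub>E Q. assigned_sum I \<sigma> L a \<le> c - r \<or> c + r \<le> assigned_sum I \<sigma> L a})
     \<le> 2 * exp (2 - \<eta>) * real (card Q) ^ card I"
proof -
  have "card {\<sigma>\<in>I \<rightarrow>\<^sub>E Q. assigned_sum I \<sigma> L a \<le> c - r \<or> c + r \<le> assigned_sum I \<sigma> L a}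
      \<le> card {\<sigma>\<in>I \<rightarrow>\<^sub>E Q. assigned_sum I \<sigma> L a \<le> c - r} + card {\<sigma>\<in>I \<rightarrow>\<^sub>E Q. c + r \<le> assigned_sum I \<sigma> L a}"
    by (simp add: Collect_conj_eq[symmetric] conj_disj_distribL Collect_disj_eq card_Un_le)
  then have "real (card {\<sigma>\<in>I \<rightarrow>\<^sub>E Q. assigned_sum I \<sigma> L a \<le> c - r \<or> c + r \<le> assigned_sum I \<sigma> L a})
      \<le> exp (2 - \<eta>) * real (card Q) ^ card I + exp (1 - \<eta>) * real (card Q) ^ card I"
    using assigned_sum_lower_tail[OF I Q L a M \<mu>[unfolded \<mu>_def], of \<eta>]
      assigned_sum_upper_tail[OF I Q L a M \<mu>(1)[unfolded \<mu>_def], of \<eta>]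
    unfolding r_def by linarith
  also have "\<dots> \<le> 2 * exp (2 - \<eta>) * real (card Q) ^ card I"
    using mult_right_mono[of "exp (1 - \<eta>)" "exp (2 - \<eta>)" "real (card Q) ^ card I"] by (simp add: mult.commute)
  finally show ?thesis .
qed

lemma grp_subset: "grp \<sigma> n l j \<subseteq> {1..n}"
  by (induction l arbitrary: j) auto

lemma grp_eq_block:
  assumes "1 \<le> j"
  shows "grp \<sigma> n l j = {i\<in>{1..n}. \<sigma> i \<in> {(j - 1) * 2 ^ l<..j * 2 ^ l}}"
  using assms
proof (induction l arbitrary: j)
  case 0
  then show ?case by auto
next
  case (Suc l)
  then have "grp \<sigma> n (Suc l) j
      = {i\<in>{1..n}. \<sigma> i \<in> {(2 * j - 2) * 2 ^ l<..(2 * j - 1) * 2 ^ l}}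
        \<union> {i\<in>{1..n}. \<sigma> i \<in> {(2 * j - 1) * 2 ^ l<..2 * j * 2 ^ l}}"
    by (simp add: numeral_2_eq_2)
  also have "\<dots> = {i\<in>{1..n}. \<sigma> i \<in> {(j - 1) * 2 ^ Suc l<..j * 2 ^ Suc l}}"
    using Suc.prems by (auto simp: algebra_simps)
  finally show ?case .
qed

lemma wsum_grp_Suc:
  assumes "1 \<le> j"
  shows "wsum f (grp \<sigma> n (Suc l) j) x = wsum f (grp \<sigma> n l (2 * j - 1)) x + wsum f (grp \<sigma> n l (2 * j)) x"
proof -
  have "grp \<sigma> n l (2 * j - 1) \<inter> grp \<sigma> n l (2 * j) = {}"
    using assms by (auto simp: grp_eq_block)
  then show ?thesis
    unfolding wsum_def grp.simps
    by (intro sum.union_disjoint) (auto intro: finite_subset[OF grp_subset])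
qed

lemma wsum_le_profit_seq:
  assumes "x \<in> binvecs n"
  shows "wsum p J x \<le> profit_seq n p w J (wsum w J x)"
proof -
  have "finite (binvecs n)" by (simp add: binvecs_def finite_PiE)
  then show ?thesis
    unfolding profit_seq_def using assms by (intro Max_ge) auto
qed

lemma children_in_blocks:
  fixes j q l :: nat
  assumes "j \<in> {1..q div 2 ^ Suc l}"
  shows "2 * j - 1 \<in> {1..q div 2 ^ l}" and "2 * j \<in> {1..q div 2 ^ l}"
proof -
  have "j \<le> q div 2 ^ l div 2"
    using assms by (simp add: power_Suc2 div_mult2_eq del: power_Suc)
  then have "2 * j \<le> 2 * (q div 2 ^ l div 2)" by simp
  also have "\<dots> \<le> q div 2 ^ l" by (rule times_div_less_eq_dividend)
  finally show "2 * j - 1 \<in> {1..q div 2 ^ l}" and "2 * j \<in> {1..q div 2 ^ l}"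
    using assms by auto
qed

lemma Carr_Suc_ge:
  assumes "i \<in> Jset n w W q l" "i' \<in> Jset n w W q l"
  shows "Carr n p w W q \<sigma> l (2 * j - 1) i + Carr n p w W q \<sigma> l (2 * j) i'
    \<le> Carr n p w W q \<sigma> (Suc l) j (i + i')"
  unfolding Carr.simps using assms by (intro Sup_upper) blast

lemma Carr_ge_profit:
  assumes x: "x \<in> binvecs n"
    and windows: "\<forall>l'<l. \<forall>j'\<in>{1..q div 2 ^ l'}. wsum w (grp \<sigma> n l' j') x \<in> Jset n w W q l'"
    and j: "j \<in> {1..q div 2 ^ l}"
  shows "ereal (real (wsum p (grp \<sigma> n l j) x)) \<le> Carr n p w W q \<sigma> l j (wsum w (grp \<sigma> n l j) x)"
  using windows j
proof (induction l arbitrary: j)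
  case 0
  then show ?case using wsum_le_profit_seq[OF x] by simp
next
  case (Suc l)
  note children = children_in_blocks[OF Suc.prems(2)]
  have IH: "ereal (real (wsum p (grp \<sigma> n l j') x)) \<le> Carr n p w W q \<sigma> l j' (wsum w (grp \<sigma> n l j') x)"
    if "j' \<in> {1..q div 2 ^ l}" for j'
    using Suc that by simp
  have "ereal (real (wsum p (grp \<sigma> n (Suc l) j) x))
      = ereal (real (wsum p (grp \<sigma> n l (2 * j - 1)) x)) + ereal (real (wsum p (grp \<sigma> n l (2 * j)) x))"
    using Suc.prems(2) by (simp add: wsum_grp_Suc del: grp.simps)
  also have "\<dots> \<le> Carr n p w W q \<sigma> l (2 * j - 1) (wsum w (grp \<sigma> n l (2 * j - 1)) x)
                 + Carr n p w W q \<sigma> l (2 * j) (wsum w (grp \<sigma> n l (2 * j)) x)"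
    using IH children by (intro add_mono) auto
  also have "\<dots> \<le> Carr n p w W q \<sigma> (Suc l) j
                   (wsum w (grp \<sigma> n l (2 * j - 1)) x + wsum w (grp \<sigma> n l (2 * j)) x)"
    using Suc.prems(1) children by (intro Carr_Suc_ge) auto
  also have "\<dots> = Carr n p w W q \<sigma> (Suc l) j (wsum w (grp \<sigma> n (Suc l) j) x)"
    using Suc.prems(2) by (simp add: wsum_grp_Suc del: grp.simps Carr.simps)
  finally show ?case .
qed

lemma notin_nat_interval_le_or_ge:
  assumes "t \<notin> nat_interval a b"
  shows "real t \<le> a \<or> b \<le> real t"
  using assms by (auto simp: nat_interval_def not_le less_floor_iff ceiling_less_iff)

lemma w_le_wmax: "i \<in> {1..n} \<Longrightarrow> w i \<le> wmax n w"
  unfolding wmax_def by (rule Max_ge) auto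

lemma wsum_grp_in_Jset_if_wmax_0:
  assumes "wmax n w = 0" "W \<le> n * wmax n w"
  shows "wsum w (grp \<sigma> n l j) x \<in> Jset n w W q l"
proof -
  have "wsum w (grp \<sigma> n l j) x = 0"
    unfolding wsum_def using grp_subset w_le_wmax[of _ n w] assms(1)
    by (intro sum.neutral) fastforce
  then show ?thesis
    using assms by (simp add: Jset_def nat_interval_def)
qed

lemma block_le_groups:
  fixes j q l :: nat
  assumes "j \<in> {1..q div 2 ^ l}"
  shows "j * 2 ^ l \<le> q" and "2 ^ l \<le> q"
proof -
  have "j * 2 ^ l \<le> q div 2 ^ l * 2 ^ l" using assms by simp
  also have "\<dots> \<le> q" by simp
  finally show "j * 2 ^ l \<le> q" .
  moreover have "2 ^ l \<le> j * 2 ^ l" using assms by simp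
  ultimately show "2 ^ l \<le> q" by linarith
qed

lemma item_weight_le_wmax:
  assumes "x \<in> binvecs n" "i \<in> {1..n}"
  shows "w i * x i \<le> wmax n w"
proof -
  have "x i \<le> 1" using PiE_mem[OF assms(1)[unfolded binvecs_def] assms(2)] by auto
  then have "w i * x i \<le> w i" using mult_le_mono2[of "x i" 1 "w i"] by simp
  then show ?thesis using w_le_wmax[OF assms(2), of w] by linarith
qed

lemma real_wsum_grp_eq_assigned_sum:
  assumes "1 \<le> j"
  shows "real (wsum w (grp \<sigma> n l j) x)
    = assigned_sum {1..n} \<sigma> {(j - 1) * 2 ^ l<..j * 2 ^ l} (\<lambda>i. real (w i * x i))"
proof -
  have "real (wsum w (grp \<sigma> n l j) x)
      = (\<Sum>i\<in>{i\<in>{1..n}. \<sigma> i \<in> {(j - 1) * 2 ^ l<..j * 2 ^ l}}. real (w i * x i))"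
    unfolding grp_eq_block[OF assms] wsum_def by (simp only: of_nat_sum)
  also have "\<dots> = assigned_sum {1..n} \<sigma> {(j - 1) * 2 ^ l<..j * 2 ^ l} (\<lambda>i. real (w i * x i))"
    unfolding assigned_sum_def by (rule sum.inter_filter) simp
  finally show ?thesis .
qed

lemma block_mean_near_center:
  fixes q W M s :: nat
  assumes "2 ^ l \<le> q" "q * M \<le> W" "W - M \<le> s" "s \<le> W"
  defines "(c::real) \<equiv> real W / real q * 2 ^ l" and "(\<mu>::real) \<equiv> 2 ^ l / real q * real s"
  shows "\<mu> \<le> c" and "c - \<mu> \<le> real M" and "real M \<le> c"
proof -
  have "0 < q" by (rule order_less_le_trans[OF _ assms(1)]) simp
  then have q: "0 < real q" "2 ^ l \<le> real q"
    using of_nat_mono[OF assms(1), where 'a=real] by simp_all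
  have s: "real s \<le> real W" "real W - real s \<le> real M"
    using assms(3,4) by (simp_all add: le_diff_conv flip: of_nat_add)
  have c: "c = 2 ^ l / real q * real W" by (simp add: c_def)
  show "\<mu> \<le> c"
    unfolding \<mu>_def c using s(1) by (intro mult_left_mono) simp_all
  have "c - \<mu> = 2 ^ l / real q * (real W - real s)"
    by (simp add: \<mu>_def c right_diff_distrib)
  also have "\<dots> \<le> 1 * real M"
    using s q by (intro mult_mono) simp_all
  finally show "c - \<mu> \<le> real M" by simp
  have "real M \<le> real W / real q"
    using assms(2) q by (simp add: field_simps flip: of_nat_mult)
  also have "\<dots> \<le> c"
    unfolding c_def using mult_left_mono[OF one_le_power[of "2::real" l], of "real W / real q"] by simp
  finally show "real M \<le> c" .
qed

lemma card_grp_weight_notin_Jset_le: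
  fixes w x :: "nat \<Rightarrow> nat"
  assumes x: "x \<in> binvecs n" and wmax_pos: "0 < wmax n w" and qW: "q * wmax n w \<le> W"
    and total: "W - wmax n w \<le> wsum w {1..n} x" "wsum w {1..n} x \<le> W"
    and j: "j \<in> {1..q div 2 ^ l}"
  shows "real (card {\<sigma>\<in>{1..n} \<rightarrow>\<^sub>E {1..q}. wsum w (grp \<sigma> n l j) x \<notin> Jset n w W q l})
    \<le> 2 * exp (2 - 11 * ln (real n)) * real q ^ n"
proof -
  define M where "M = real (wmax n w)"
  define L where "L = {(j - 1) * 2 ^ l<..j * 2 ^ l}"
  define a where "a i = real (w i * x i)" for i
  define c where "c = real W / real q * 2 ^ l"
  define r where "r = sqrt (M * c) * (11 * ln (real n))"
  have L: "L \<subseteq> {1..q}" "card L = 2 ^ l"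
    using block_le_groups[OF j] j by (auto simp: L_def diff_mult_distrib)
  have a: "0 \<le> a i \<and> a i \<le> M" if "i \<in> {1..n}" for i
    using item_weight_le_wmax[OF x that, of w] by (simp add: a_def M_def del: of_nat_mult)
  have M_pos: "0 < M" using wmax_pos by (simp add: M_def)
  have "(1::nat) \<le> 2 ^ l" by simp
  then have groups: "{1..q} \<noteq> {}" using block_le_groups(2)[OF j] by (simp; linarith)
  have "real (card L) / real (card {1..q}) * sum a {1..n} = 2 ^ l / real q * real (wsum w {1..n} x)"
    by (simp add: L a_def wsum_def)
  note near = block_mean_near_center[OF block_le_groups(2)[OF j] qW total, folded M_def c_def this]
  have far: "real (card {\<sigma>\<in>{1..n} \<rightarrow>\<^sub>E {1..q}.
        assigned_sum {1..n} \<sigma> L a \<le> c - r \<or> c + r \<le> assigned_sum {1..n} \<sigma> L a})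
      \<le> 2 * exp (2 - 11 * ln (real n)) * real q ^ n"
    using card_assigned_sum_far_from_center_le[OF finite_atLeastAtMost finite_atLeastAtMost groups
        L(1) a M_pos near(3,1,2), of "11 * ln (real n)"]
    by (simp add: r_def)
  have "Jset n w W q l = nat_interval (c - r) (c + r)"
    by (simp add: Jset_def Let_def c_def r_def M_def mult.assoc)
  then have "assigned_sum {1..n} \<sigma> L a \<le> c - r \<or> c + r \<le> assigned_sum {1..n} \<sigma> L a"
    if "wsum w (grp \<sigma> n l j) x \<notin> Jset n w W q l" for \<sigma>
    using notin_nat_interval_le_or_ge that real_wsum_grp_eq_assigned_sum[of j w \<sigma> n l x] j
    unfolding L_def a_def by (metis atLeastAtMost_iff)
  then have "card {\<sigma>\<in>{1..n} \<rightarrow>\<^sub>E {1..q}. wsum w (grp \<sigma> n l j) x \<notin> Jset n w W q l}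
      \<le> card {\<sigma>\<in>{1..n} \<rightarrow>\<^sub>E {1..q}. assigned_sum {1..n} \<sigma> L a \<le> c - r \<or> c + r \<le> assigned_sum {1..n} \<sigma> L a}"
    by (intro card_mono) (auto simp: finite_PiE)
  with far show ?thesis by linarith
qed

lemma prob_pmf_of_set_ge_union_bound:
  fixes F :: "'i \<Rightarrow> 'a set"
  assumes S: "finite S" "S \<noteq> {}" and I: "finite I"
    and cover: "S - G \<subseteq> (\<Union>i\<in>I. F i)"
    and F: "\<And>i. i \<in> I \<Longrightarrow> F i \<subseteq> S" "\<And>i. i \<in> I \<Longrightarrow> real (card (F i)) \<le> B"
  shows "1 - real (card I) * B / real (card S) \<le> measure_pmf.prob (pmf_of_set S) G"
proof -
  have "card (S - G) \<le> card (\<Union>i\<in>I. F i)"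
    using cover F(1) S(1) I by (intro card_mono) (auto intro: finite_subset)
  also have "\<dots> \<le> (\<Sum>i\<in>I. card (F i))"
    by (rule card_UN_le[OF I])
  finally have "real (card (S - G)) \<le> (\<Sum>i\<in>I. real (card (F i)))"
    by (simp flip: of_nat_sum)
  also have "\<dots> \<le> real (card I) * B"
    using sum_mono[of I "\<lambda>i. real (card (F i))" "\<lambda>_. B"] F(2) by simp
  finally have bad: "real (card (S - G)) \<le> real (card I) * B" .
  have "card (S \<inter> G) = card S - card (S - G)"
    using S(1) by (metis Diff_Diff_Int Diff_subset card_Diff_subset finite_Diff)
  then have "real (card (S \<inter> G)) = real (card S) - real (card (S - G))"
    using S(1) by (simp add: card_mono of_nat_diff)
  moreover have "0 < real (card S)"
    using S by (simp add: card_gt_0_iff)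
  ultimately show ?thesis
    using bad S by (simp add: measure_pmf_of_set diff_divide_distrib divide_right_mono)
qed

lemma mult_two_exp_tail_le_inverse_square:
  fixes n :: nat and K :: real
  assumes n: "3 \<le> n" and K: "0 \<le> K" "K \<le> real n * real n"
  shows "K * (2 * exp (2 - 11 * ln (real n))) \<le> 1 / real n ^ 2"
proof -
  have n0: "0 < real n" using n by simp
  have "11 * ln (real n) = ln (real n ^ 11)"
    using n0 by (simp add: ln_realpow)
  then have "exp (11 * ln (real n)) = real n ^ 11"
    using n0 by simp
  then have "K * (2 * exp (2 - 11 * ln (real n))) = K * 2 * exp 2 / real n ^ 11"
    by (simp add: exp_diff)
  also have "\<dots> \<le> real n * real n * 2 * 9 / real n ^ 11"
  proof -
    have "exp (2::real) = exp 1 * exp 1" by (simp flip: exp_add)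
    also have "\<dots> \<le> 3 * 3" using exp_le by (intro mult_mono) auto
    finally show ?thesis using K n0 by (intro divide_right_mono mult_mono) auto
  qed
  also have "\<dots> = 18 / real n ^ 9"
    using n0 by (simp add: field_simps eval_nat_numeral)
  also have "\<dots> \<le> real n ^ 7 / real n ^ 9"
    using power_mono[of 3 "real n" 7] n by (intro divide_right_mono) auto
  also have "\<dots> = 1 / real n ^ 2"
    using n0 by (simp add: field_simps eval_nat_numeral)
  finally show ?thesis .
qed

lemma card_levels_blocks_le:
  assumes "q = 2 ^ k"
  shows "card (SIGMA l:{..k}. {1..q div 2 ^ l}) \<le> q * q"
proof -
  have "card (SIGMA l:{..k}. {1..q div 2 ^ l}) = (\<Sum>l\<le>k. q div 2 ^ l)"
    by simp
  also have "\<dots> \<le> (\<Sum>l\<le>k. q)"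
    by (intro sum_mono) simp
  also have "\<dots> = Suc k * q" by simp
  also have "\<dots> \<le> q * q"
    using assms less_exp[of k] by (intro mult_right_mono) (simp_all add: Suc_le_eq)
  finally show ?thesis .
qed

lemma prob_all_windows_ge_union_bound:
  fixes B :: real
  assumes x: "x \<in> binvecs n" and q: "0 < q"
    and B: "\<And>l j. l \<le> k \<Longrightarrow> j \<in> {1..q div 2 ^ l} \<Longrightarrow>
      real (card {\<sigma>\<in>{1..n} \<rightarrow>\<^sub>E {1..q}. wsum w (grp \<sigma> n l j) x \<notin> Jset n w W q l}) \<le> B"
  shows "1 - real (card (SIGMA l:{..k}. {1..q div 2 ^ l})) * B / real q ^ n
    \<le> measure_pmf.prob (pmf_of_set ({1..n} \<rightarrow>\<^sub>E {1..q}))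
         {\<sigma>. \<forall>l \<le> k. \<forall>j \<in> {1..q div 2 ^ l}.
                wsum w (grp \<sigma> n l j) x \<in> Jset n w W q l \<and>
                Carr n p w W q \<sigma> l j (wsum w (grp \<sigma> n l j) x)
                  \<ge> ereal (real (wsum p (grp \<sigma> n l j) x))}"
    (is "_ \<le> measure_pmf.prob (pmf_of_set ?S) ?G")
proof -
  define F where "F = (\<lambda>(l, j). {\<sigma>\<in>?S. wsum w (grp \<sigma> n l j) x \<notin> Jset n w W q l})"
  have S: "finite ?S" "?S \<noteq> {}" "card ?S = q ^ n"
    using q by (simp_all add: card_PiE PiE_eq_empty_iff finite_PiE)
  have "?S - ?G \<subseteq> (\<Union>i\<in>(SIGMA l:{..k}. {1..q div 2 ^ l}). F i)"
  proof
    fix \<sigma> assume \<sigma>: "\<sigma> \<in> ?S - ?G"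
    moreover have "\<sigma> \<in> ?G"
      if windows: "\<forall>l\<le>k. \<forall>j\<in>{1..q div 2 ^ l}. wsum w (grp \<sigma> n l j) x \<in> Jset n w W q l"
    proof -
      have "ereal (real (wsum p (grp \<sigma> n l j) x)) \<le> Carr n p w W q \<sigma> l j (wsum w (grp \<sigma> n l j) x)"
        if "l \<le> k" "j \<in> {1..q div 2 ^ l}" for l j
        by (rule Carr_ge_profit[OF x _ that(2)]) (use windows that(1) in auto)
      with windows show ?thesis by auto
    qed
    ultimately have "\<not> (\<forall>l\<le>k. \<forall>j\<in>{1..q div 2 ^ l}. wsum w (grp \<sigma> n l j) x \<in> Jset n w W q l)"
      by blast
    then show "\<sigma> \<in> (\<Union>i\<in>(SIGMA l:{..k}. {1..q div 2 ^ l}). F i)"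
      using \<sigma> by (auto simp: F_def)
  qed
  from prob_pmf_of_set_ge_union_bound[OF S(1,2) _ this] show ?thesis
    using B S(3) by (auto simp: F_def)
qed

theorem mainTheorem7:
  fixes n W q k :: nat and p w x :: "nat \<Rightarrow> nat"
  assumes "n \<ge> 3"
    and "wmax n w \<le> W" and "W \<le> n * wmax n w"
    and "q = 2 ^ k" and "q * wmax n w \<le> W"
    and "x \<in> binvecs n"
    and "W - wmax n w \<le> wsum w {1..n} x" and "wsum w {1..n} x \<le> W"
  shows "measure_pmf.prob (pmf_of_set ({1..n} \<rightarrow>\<^sub>E {1..q}))
           {\<sigma>. \<forall>l \<le> k. \<forall>j \<in> {1..q div 2 ^ l}.
                  wsum w (grp \<sigma> n l j) x \<in> Jset n w W q l \<and>
                  Carr n p w W q \<sigma> l j (wsum w (grp \<sigma> n l j) x)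
                    \<ge> ereal (real (wsum p (grp \<sigma> n l j) x))}
         \<ge> 1 - 1 / (real n) ^ 2"
proof -
  define G where "G = {\<sigma>. \<forall>l \<le> k. \<forall>j \<in> {1..q div 2 ^ l}.
                  wsum w (grp \<sigma> n l j) x \<in> Jset n w W q l \<and>
                  Carr n p w W q \<sigma> l j (wsum w (grp \<sigma> n l j) x)
                    \<ge> ereal (real (wsum p (grp \<sigma> n l j) x))}"
  have bound: "1 - real (card (SIGMA l:{..k}. {1..q div 2 ^ l})) * B / real q ^ n
      \<le> measure_pmf.prob (pmf_of_set ({1..n} \<rightarrow>\<^sub>E {1..q})) G"
    if "\<And>l j. l \<le> k \<Longrightarrow> j \<in> {1..q div 2 ^ l} \<Longrightarrow>
      real (card {\<sigma>\<in>{1..n} \<rightarrow>\<^sub>E {1..q}. wsum w (grp \<sigma> n l j) x \<notin> Jset n w W q l}) \<le> B" for B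
    unfolding G_def using assms(4) that by (intro prob_all_windows_ge_union_bound[OF assms(6)]) auto
  have "1 - 1 / real n ^ 2 \<le> measure_pmf.prob (pmf_of_set ({1..n} \<rightarrow>\<^sub>E {1..q})) G"
  proof (cases "wmax n w = 0")
    case True
    then have "1 \<le> measure_pmf.prob (pmf_of_set ({1..n} \<rightarrow>\<^sub>E {1..q})) G"
      using bound[of 0] wsum_grp_in_Jset_if_wmax_0[OF True assms(3)] by simp
    moreover have "0 \<le> 1 / real n ^ 2" by simp
    ultimately show ?thesis by linarith
  next
    case False
    define B where "B = 2 * exp (2 - 11 * ln (real n)) * real q ^ n"
    have "q * wmax n w \<le> n * wmax n w" using assms(3,5) by linarith
    then have "card (SIGMA l:{..k}. {1..q div 2 ^ l}) \<le> n * n"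
      using False card_levels_blocks_le[OF assms(4)] mult_le_mono[of q n q n] by simp
    then have "real (card (SIGMA l:{..k}. {1..q div 2 ^ l})) \<le> real n * real n"
      by (metis of_nat_mono of_nat_mult)
    then have "real (card (SIGMA l:{..k}. {1..q div 2 ^ l})) * (2 * exp (2 - 11 * ln (real n)))
        \<le> 1 / real n ^ 2"
      by (rule mult_two_exp_tail_le_inverse_square[OF assms(1) of_nat_0_le_iff])
    moreover have "real (card (SIGMA l:{..k}. {1..q div 2 ^ l})) * B / real q ^ n
        = real (card (SIGMA l:{..k}. {1..q div 2 ^ l})) * (2 * exp (2 - 11 * ln (real n)))"
      using assms(4) by (simp add: B_def)
    moreover have "1 - real (card (SIGMA l:{..k}. {1..q div 2 ^ l})) * B / real q ^ n
        \<le> measure_pmf.prob (pmf_of_set ({1..n} \<rightarrow>\<^sub>E {1..q})) G"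
      using card_grp_weight_notin_Jset_le[OF assms(6) _ assms(5,7,8)] False
      by (intro bound) (simp add: B_def)
    ultimately show ?thesis by linarith
  qed
  then show ?thesis unfolding G_def .
qed

end
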